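(* Let $M$ be a monoidal category which admits functorial inverses. Then for any choice of functorial inverses $i:M\to M$ there is a natural isomorphism $i^2(x)\cong x$.
   Context: A monoidal category $M$ admits functorial inverses if there exist a functor $i:M\to M$ and a natural isomorphism $x\otimes i(x)\cong 1$; a choice of functorial inverses is a specific such functor and natural isomorphism. *)

theory Defs
  imports Main
begin

text \<open>Categories in set-theoretic style: objects, arrows with domain and
codomain, composition (cmp g f means g after f) and identities.\<close>

record ('o, 'a) cat =
  Obj :: "'o set"
  Arr :: "'a set"
  cdom :: "'a \<Rightarrow> 'o"
  ccod :: "'a \<Rightarrow> 'o"
  cmp :: "'a \<Rightarrow> 'a \<Rightarrow> 'a"
  idt :: "'o \<Rightarrow> 'a"

definition Hom :: "('o, 'a, 'z) cat_scheme \<Rightarrow> 'o \<Rightarrow> 'o \<Rightarrow> 'a set" where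
  "Hom C x y = {f \<in> Arr C. cdom C f = x \<and> ccod C f = y}"

definition category :: "('o, 'a, 'z) cat_scheme \<Rightarrow> bool" where
  "category C \<longleftrightarrow>
     (\<forall>f \<in> Arr C. cdom C f \<in> Obj C \<and> ccod C f \<in> Obj C) \<and>
     (\<forall>x \<in> Obj C. idt C x \<in> Hom C x x) \<and>
     (\<forall>x \<in> Obj C. \<forall>y \<in> Obj C. \<forall>z \<in> Obj C. \<forall>f \<in> Hom C x y. \<forall>g \<in> Hom C y z.
        cmp C g f \<in> Hom C x z) \<and>
     (\<forall>f \<in> Arr C. cmp C f (idt C (cdom C f)) = f \<and> cmp C (idt C (ccod C f)) f = f) \<and>
     (\<forall>f \<in> Arr C. \<forall>g \<in> Arr C. \<forall>h \<in> Arr C.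
        cdom C g = ccod C f \<longrightarrow> cdom C h = ccod C g \<longrightarrow>
        cmp C h (cmp C g f) = cmp C (cmp C h g) f)"

definition iso_in :: "('o, 'a, 'z) cat_scheme \<Rightarrow> 'a \<Rightarrow> 'o \<Rightarrow> 'o \<Rightarrow> bool" where
  "iso_in C f x y \<longleftrightarrow> f \<in> Hom C x y \<and>
     (\<exists>g \<in> Hom C y x. cmp C g f = idt C x \<and> cmp C f g = idt C y)"

definition endofunctor ::
  "('o, 'a, 'z) cat_scheme \<Rightarrow> ('o \<Rightarrow> 'o) \<Rightarrow> ('a \<Rightarrow> 'a) \<Rightarrow> bool" where
  "endofunctor C Fo Fa \<longleftrightarrow>
     (\<forall>x \<in> Obj C. Fo x \<in> Obj C) \<and>
     (\<forall>x \<in> Obj C. \<forall>y \<in> Obj C. \<forall>f \<in> Hom C x y. Fa f \<in> Hom C (Fo x) (Fo y)) \<and>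
     (\<forall>x \<in> Obj C. Fa (idt C x) = idt C (Fo x)) \<and>
     (\<forall>f \<in> Arr C. \<forall>g \<in> Arr C. cdom C g = ccod C f \<longrightarrow>
        Fa (cmp C g f) = cmp C (Fa g) (Fa f))"

definition nat_trans ::
  "('o, 'a, 'z) cat_scheme \<Rightarrow> ('o \<Rightarrow> 'o) \<Rightarrow> ('a \<Rightarrow> 'a) \<Rightarrow> ('o \<Rightarrow> 'o) \<Rightarrow> ('a \<Rightarrow> 'a)
     \<Rightarrow> ('o \<Rightarrow> 'a) \<Rightarrow> bool" where
  "nat_trans C Fo Fa Go Ga \<theta> \<longleftrightarrow>
     (\<forall>x \<in> Obj C. \<theta> x \<in> Hom C (Fo x) (Go x)) \<and>
     (\<forall>f \<in> Arr C. cmp C (\<theta> (ccod C f)) (Fa f) = cmp C (Ga f) (\<theta> (cdom C f)))"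

definition nat_iso ::
  "('o, 'a, 'z) cat_scheme \<Rightarrow> ('o \<Rightarrow> 'o) \<Rightarrow> ('a \<Rightarrow> 'a) \<Rightarrow> ('o \<Rightarrow> 'o) \<Rightarrow> ('a \<Rightarrow> 'a)
     \<Rightarrow> ('o \<Rightarrow> 'a) \<Rightarrow> bool" where
  "nat_iso C Fo Fa Go Ga \<theta> \<longleftrightarrow>
     nat_trans C Fo Fa Go Ga \<theta> \<and> (\<forall>x \<in> Obj C. iso_in C (\<theta> x) (Fo x) (Go x))"

record ('o, 'a) moncat = "('o, 'a) cat" +
  tob :: "'o \<Rightarrow> 'o \<Rightarrow> 'o"
  tar :: "'a \<Rightarrow> 'a \<Rightarrow> 'a"
  munit :: "'o"
  massoc :: "'o \<Rightarrow> 'o \<Rightarrow> 'o \<Rightarrow> 'a"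
  lunit :: "'o \<Rightarrow> 'a"
  runit :: "'o \<Rightarrow> 'a"

definition monoidal_category :: "('o, 'a, 'z) moncat_scheme \<Rightarrow> bool" where
  "monoidal_category M \<longleftrightarrow>
     category M \<and>
     \<comment> \<open>the tensor product is a bifunctor\<close>
     (\<forall>x \<in> Obj M. \<forall>y \<in> Obj M. tob M x y \<in> Obj M) \<and>
     (\<forall>f \<in> Arr M. \<forall>g \<in> Arr M.
        tar M f g \<in> Hom M (tob M (cdom M f) (cdom M g)) (tob M (ccod M f) (ccod M g))) \<and>
     (\<forall>x \<in> Obj M. \<forall>y \<in> Obj M. tar M (idt M x) (idt M y) = idt M (tob M x y)) \<and>
     (\<forall>f \<in> Arr M. \<forall>f' \<in> Arr M. \<forall>g \<in> Arr M. \<forall>g' \<in> Arr M.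
        cdom M f' = ccod M f \<longrightarrow> cdom M g' = ccod M g \<longrightarrow>
        tar M (cmp M f' f) (cmp M g' g) = cmp M (tar M f' g') (tar M f g)) \<and>
     \<comment> \<open>unit object\<close>
     munit M \<in> Obj M \<and>
     \<comment> \<open>associator: natural isomorphism\<close>
     (\<forall>x \<in> Obj M. \<forall>y \<in> Obj M. \<forall>z \<in> Obj M.
        iso_in M (massoc M x y z) (tob M (tob M x y) z) (tob M x (tob M y z))) \<and>
     (\<forall>f \<in> Arr M. \<forall>g \<in> Arr M. \<forall>h \<in> Arr M.
        cmp M (massoc M (ccod M f) (ccod M g) (ccod M h)) (tar M (tar M f g) h) =
        cmp M (tar M f (tar M g h)) (massoc M (cdom M f) (cdom M g) (cdom M h))) \<and>
     \<comment> \<open>left and right unitors: natural isomorphisms\<close>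
     (\<forall>x \<in> Obj M. iso_in M (lunit M x) (tob M (munit M) x) x) \<and>
     (\<forall>f \<in> Arr M. cmp M (lunit M (ccod M f)) (tar M (idt M (munit M)) f) =
                   cmp M f (lunit M (cdom M f))) \<and>
     (\<forall>x \<in> Obj M. iso_in M (runit M x) (tob M x (munit M)) x) \<and>
     (\<forall>f \<in> Arr M. cmp M (runit M (ccod M f)) (tar M f (idt M (munit M))) =
                   cmp M f (runit M (cdom M f))) \<and>
     \<comment> \<open>pentagon\<close>
     (\<forall>w \<in> Obj M. \<forall>x \<in> Obj M. \<forall>y \<in> Obj M. \<forall>z \<in> Obj M.
        cmp M (tar M (idt M w) (massoc M x y z))
          (cmp M (massoc M w (tob M x y) z) (tar M (massoc M w x y) (idt M z))) =
        cmp M (massoc M w x (tob M y z)) (massoc M (tob M w x) y z)) \<and>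
     \<comment> \<open>triangle\<close>
     (\<forall>x \<in> Obj M. \<forall>y \<in> Obj M.
        cmp M (tar M (idt M x) (lunit M y)) (massoc M x (munit M) y) =
        tar M (runit M x) (idt M y))"

text \<open>A choice of functorial inverses: a functor i (object map io, arrow map ia)
and a natural isomorphism eps : x \<otimes> i(x) \<cong> 1 (from the functor x \<mapsto> x \<otimes> i x
to the constant functor at the unit).\<close>

definition functorial_inverses_choice ::
  "('o, 'a, 'z) moncat_scheme \<Rightarrow> ('o \<Rightarrow> 'o) \<Rightarrow> ('a \<Rightarrow> 'a) \<Rightarrow> ('o \<Rightarrow> 'a) \<Rightarrow> bool" where
  "functorial_inverses_choice M io ia eps \<longleftrightarrow>
     endofunctor M io ia \<and>
     nat_iso M (\<lambda>x. tob M x (io x)) (\<lambda>f. tar M f (ia f))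
               (\<lambda>x. munit M) (\<lambda>f. idt M (munit M)) eps"

definition admits_functorial_inverses :: "('o, 'a, 'z) moncat_scheme \<Rightarrow> bool" where
  "admits_functorial_inverses M \<longleftrightarrow> (\<exists>io ia eps. functorial_inverses_choice M io ia eps)"

end

theory Submission
  imports Defs
begin

text \<open>The object \<open>(x \<otimes> i x) \<otimes> i\<^sup>2 x\<close> can be collapsed in two ways. Applying the
counit \<open>x \<otimes> i x \<cong> 1\<close> to the left factor and then the left unitor gives
\<open>(x \<otimes> i x) \<otimes> i\<^sup>2 x \<cong> i\<^sup>2 x\<close>; reassociating, applying the counit at \<open>i x\<close>
and then the right unitor gives \<open>(x \<otimes> i x) \<otimes> i\<^sup>2 x \<cong> x \<otimes> (i x \<otimes> i\<^sup>2 x) \<cong> x \<otimes> 1 \<cong> x\<close>.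
Both are natural in \<open>x\<close>, because associator, unitors and counit are natural and tensor
products of natural isomorphisms are natural.\<close>

text \<open>The only part of the functor axioms that the naturality arguments use.\<close>

definition hom_preserving :: "('o, 'a, 'z) cat_scheme \<Rightarrow> ('o \<Rightarrow> 'o) \<Rightarrow> ('a \<Rightarrow> 'a) \<Rightarrow> bool" where
  "hom_preserving C Fo Fa \<longleftrightarrow> (\<forall>f \<in> Arr C. Fa f \<in> Hom C (Fo (cdom C f)) (Fo (ccod C f)))"

lemma Arr_Hom: "f \<in> Arr C \<Longrightarrow> f \<in> Hom C (cdom C f) (ccod C f)"
  by (simp add: Hom_def)

lemma hom_preserving_Arr:
  "hom_preserving C Fo Fa \<Longrightarrow> f \<in> Arr C \<Longrightarrow> Fa f \<in> Hom C (Fo (cdom C f)) (Fo (ccod C f))"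
  unfolding hom_preserving_def by blast

lemma nat_iso_iso: "nat_iso C Fo Fa Go Ga \<theta> \<Longrightarrow> x \<in> Obj C \<Longrightarrow> iso_in C (\<theta> x) (Fo x) (Go x)"
  unfolding nat_iso_def by blast

lemma nat_iso_Hom: "nat_iso C Fo Fa Go Ga \<theta> \<Longrightarrow> x \<in> Obj C \<Longrightarrow> \<theta> x \<in> Hom C (Fo x) (Go x)"
  unfolding nat_iso_def nat_trans_def by blast

lemma nat_iso_natural:
  "nat_iso C Fo Fa Go Ga \<theta> \<Longrightarrow> f \<in> Arr C \<Longrightarrow>
     cmp C (\<theta> (ccod C f)) (Fa f) = cmp C (Ga f) (\<theta> (cdom C f))"
  unfolding nat_iso_def nat_trans_def by blast

lemma nat_isoI:
  assumes "\<And>x. x \<in> Obj C \<Longrightarrow> iso_in C (\<theta> x) (Fo x) (Go x)"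
    and "\<And>f. f \<in> Arr C \<Longrightarrow> cmp C (\<theta> (ccod C f)) (Fa f) = cmp C (Ga f) (\<theta> (cdom C f))"
  shows "nat_iso C Fo Fa Go Ga \<theta>"
  using assms unfolding nat_iso_def nat_trans_def iso_in_def by blast

locale is_category =
  fixes C :: "('o, 'a, 'z) cat_scheme"
  assumes category: "category C"
begin

lemma Hom_Obj: "f \<in> Hom C x y \<Longrightarrow> x \<in> Obj C \<and> y \<in> Obj C"
  using category unfolding category_def Hom_def by auto

lemma Arr_Obj: "f \<in> Arr C \<Longrightarrow> cdom C f \<in> Obj C \<and> ccod C f \<in> Obj C"
  using Hom_Obj[OF Arr_Hom] .

lemma idt_Hom: "x \<in> Obj C \<Longrightarrow> idt C x \<in> Hom C x x"
  using category unfolding category_def by blast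

lemma comp_Hom: "f \<in> Hom C x y \<Longrightarrow> g \<in> Hom C y z \<Longrightarrow> cmp C g f \<in> Hom C x z"
  using category Hom_Obj[of f x y] Hom_Obj[of g y z] unfolding category_def by blast

lemma comp_idt_right: "f \<in> Hom C x y \<Longrightarrow> cmp C f (idt C x) = f"
  using category unfolding category_def Hom_def by auto

lemma comp_idt_left: "f \<in> Hom C x y \<Longrightarrow> cmp C (idt C y) f = f"
  using category unfolding category_def Hom_def by auto

lemma comp_assoc:
  "f \<in> Hom C w x \<Longrightarrow> g \<in> Hom C x y \<Longrightarrow> h \<in> Hom C y z \<Longrightarrow>
     cmp C h (cmp C g f) = cmp C (cmp C h g) f"
  using category unfolding category_def Hom_def by auto

lemma iso_idt: "x \<in> Obj C \<Longrightarrow> iso_in C (idt C x) x x"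
  using idt_Hom comp_idt_left unfolding iso_in_def by blast

lemma iso_comp:
  assumes "iso_in C f x y" and "iso_in C g y z"
  shows "iso_in C (cmp C g f) x z"
proof -
  obtain f' where f: "f \<in> Hom C x y" "f' \<in> Hom C y x" "cmp C f' f = idt C x" "cmp C f f' = idt C y"
    using assms(1) unfolding iso_in_def by blast
  obtain g' where g: "g \<in> Hom C y z" "g' \<in> Hom C z y" "cmp C g' g = idt C y" "cmp C g g' = idt C z"
    using assms(2) unfolding iso_in_def by blast
  have "cmp C (cmp C f' g') (cmp C g f) = cmp C f' (cmp C (cmp C g' g) f)"
    using comp_assoc[OF comp_Hom[OF f(1) g(1)] g(2) f(2)] comp_assoc[OF f(1) g(1) g(2)] by simp
  also have "\<dots> = idt C x" using f g comp_idt_left by simp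
  finally have left: "cmp C (cmp C f' g') (cmp C g f) = idt C x" .
  have "cmp C (cmp C g f) (cmp C f' g') = cmp C g (cmp C (cmp C f f') g')"
    using comp_assoc[OF comp_Hom[OF g(2) f(2)] f(1) g(1)] comp_assoc[OF g(2) f(2) f(1)] by simp
  also have "\<dots> = idt C z" using f g comp_idt_left by simp
  finally have right: "cmp C (cmp C g f) (cmp C f' g') = idt C z" .
  show ?thesis
    unfolding iso_in_def using left right comp_Hom f g by blast
qed

lemma hom_preserving_Hom: "hom_preserving C Fo Fa \<Longrightarrow> f \<in> Hom C x y \<Longrightarrow> Fa f \<in> Hom C (Fo x) (Fo y)"
  unfolding hom_preserving_def Hom_def by auto

lemma hom_preserving_Obj: "hom_preserving C Fo Fa \<Longrightarrow> x \<in> Obj C \<Longrightarrow> Fo x \<in> Obj C"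
  using hom_preserving_Hom idt_Hom Hom_Obj by meson

lemma endofunctor_hom_preserving: "endofunctor C Fo Fa \<Longrightarrow> hom_preserving C Fo Fa"
proof -
  assume "endofunctor C Fo Fa"
  then have "\<forall>x \<in> Obj C. \<forall>y \<in> Obj C. \<forall>f \<in> Hom C x y. Fa f \<in> Hom C (Fo x) (Fo y)"
    unfolding endofunctor_def by blast
  then show ?thesis
    unfolding hom_preserving_def using Arr_Obj Arr_Hom by (metis (no_types))
qed

lemma hom_preserving_id: "hom_preserving C (\<lambda>x. x) (\<lambda>f. f)"
  unfolding hom_preserving_def Hom_def by simp

lemma hom_preserving_const: "u \<in> Obj C \<Longrightarrow> hom_preserving C (\<lambda>x. u) (\<lambda>f. idt C u)"
  unfolding hom_preserving_def using idt_Hom by blast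

lemma hom_preserving_comp:
  assumes F: "hom_preserving C Fo Fa" and G: "hom_preserving C Go Ga"
  shows "hom_preserving C (\<lambda>x. Go (Fo x)) (\<lambda>f. Ga (Fa f))"
  unfolding hom_preserving_def using hom_preserving_Hom[OF G hom_preserving_Arr[OF F]] by blast

lemma nat_iso_refl:
  assumes F: "hom_preserving C Fo Fa"
  shows "nat_iso C Fo Fa Fo Fa (\<lambda>x. idt C (Fo x))"
proof (rule nat_isoI)
  show "iso_in C (idt C (Fo x)) (Fo x) (Fo x)" if "x \<in> Obj C" for x
    using iso_idt hom_preserving_Obj[OF F that] .
next
  fix f assume "f \<in> Arr C"
  then have "Fa f \<in> Hom C (Fo (cdom C f)) (Fo (ccod C f))"
    by (rule hom_preserving_Arr[OF F])
  then show "cmp C (idt C (Fo (ccod C f))) (Fa f) = cmp C (Fa f) (idt C (Fo (cdom C f)))"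
    by (simp add: comp_idt_left comp_idt_right)
qed

lemma nat_iso_trans:
  assumes F: "hom_preserving C Fo Fa" and G: "hom_preserving C Go Ga" and H: "hom_preserving C Ho Ha"
    and \<theta>: "nat_iso C Fo Fa Go Ga \<theta>" and \<phi>: "nat_iso C Go Ga Ho Ha \<phi>"
  shows "nat_iso C Fo Fa Ho Ha (\<lambda>x. cmp C (\<phi> x) (\<theta> x))"
proof (rule nat_isoI)
  show "iso_in C (cmp C (\<phi> x) (\<theta> x)) (Fo x) (Ho x)" if "x \<in> Obj C" for x
    using iso_comp nat_iso_iso[OF \<theta> that] nat_iso_iso[OF \<phi> that] by blast
next
  fix f assume f: "f \<in> Arr C"
  define a b where "a = cdom C f" and "b = ccod C f"
  have ab: "a \<in> Obj C" "b \<in> Obj C" using Arr_Obj[OF f] by (simp_all add: a_def b_def)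
  note Ff = hom_preserving_Arr[OF F f, folded a_def b_def]
  note Gf = hom_preserving_Arr[OF G f, folded a_def b_def]
  note Hf = hom_preserving_Arr[OF H f, folded a_def b_def]
  note \<theta>a = nat_iso_Hom[OF \<theta> ab(1)] and \<theta>b = nat_iso_Hom[OF \<theta> ab(2)]
  note \<phi>a = nat_iso_Hom[OF \<phi> ab(1)] and \<phi>b = nat_iso_Hom[OF \<phi> ab(2)]
  have "cmp C (cmp C (\<phi> b) (\<theta> b)) (Fa f) = cmp C (\<phi> b) (cmp C (\<theta> b) (Fa f))"
    using comp_assoc[OF Ff \<theta>b \<phi>b] by simp
  also have "\<dots> = cmp C (\<phi> b) (cmp C (Ga f) (\<theta> a))"
    using nat_iso_natural[OF \<theta> f] by (simp add: a_def b_def)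
  also have "\<dots> = cmp C (cmp C (\<phi> b) (Ga f)) (\<theta> a)"
    using comp_assoc[OF \<theta>a Gf \<phi>b] .
  also have "\<dots> = cmp C (cmp C (Ha f) (\<phi> a)) (\<theta> a)"
    using nat_iso_natural[OF \<phi> f] by (simp add: a_def b_def)
  also have "\<dots> = cmp C (Ha f) (cmp C (\<phi> a) (\<theta> a))"
    using comp_assoc[OF \<theta>a \<phi>a Hf] by simp
  finally show "cmp C (cmp C (\<phi> (ccod C f)) (\<theta> (ccod C f))) (Fa f) =
      cmp C (Ha f) (cmp C (\<phi> (cdom C f)) (\<theta> (cdom C f)))"
    by (simp add: a_def b_def)
qed

lemma nat_iso_sym:
  assumes F: "hom_preserving C Fo Fa" and G: "hom_preserving C Go Ga"
    and \<theta>: "nat_iso C Fo Fa Go Ga \<theta>"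
  shows "\<exists>\<psi>. nat_iso C Go Ga Fo Fa \<psi>"
proof -
  have "\<forall>x \<in> Obj C. \<exists>g. g \<in> Hom C (Go x) (Fo x) \<and>
      cmp C g (\<theta> x) = idt C (Fo x) \<and> cmp C (\<theta> x) g = idt C (Go x)"
    using nat_iso_iso[OF \<theta>] unfolding iso_in_def by blast
  then obtain \<psi> where \<psi>: "\<And>x. x \<in> Obj C \<Longrightarrow> \<psi> x \<in> Hom C (Go x) (Fo x) \<and>
      cmp C (\<psi> x) (\<theta> x) = idt C (Fo x) \<and> cmp C (\<theta> x) (\<psi> x) = idt C (Go x)"
    by metis
  have "nat_iso C Go Ga Fo Fa \<psi>"
  proof (rule nat_isoI)
    show "iso_in C (\<psi> x) (Go x) (Fo x)" if "x \<in> Obj C" for x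
      using \<psi>[OF that] nat_iso_Hom[OF \<theta> that] unfolding iso_in_def by blast
  next
    fix f assume f: "f \<in> Arr C"
    define a b where "a = cdom C f" and "b = ccod C f"
    have ab: "a \<in> Obj C" "b \<in> Obj C" using Arr_Obj[OF f] by (simp_all add: a_def b_def)
    note Ff = hom_preserving_Arr[OF F f, folded a_def b_def]
    note Gf = hom_preserving_Arr[OF G f, folded a_def b_def]
    note \<theta>a = nat_iso_Hom[OF \<theta> ab(1)] and \<theta>b = nat_iso_Hom[OF \<theta> ab(2)]
    note \<psi>a = \<psi>[OF ab(1)] and \<psi>b = \<psi>[OF ab(2)]
    have "cmp C (\<psi> b) (Ga f) = cmp C (\<psi> b) (cmp C (Ga f) (cmp C (\<theta> a) (\<psi> a)))"
      using \<psi>a comp_idt_right[OF Gf] by simp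
    also have "\<dots> = cmp C (\<psi> b) (cmp C (cmp C (\<theta> b) (Fa f)) (\<psi> a))"
      using comp_assoc[OF conjunct1[OF \<psi>a] \<theta>a Gf] nat_iso_natural[OF \<theta> f]
      by (simp add: a_def b_def)
    also have "\<dots> = cmp C (cmp C (cmp C (\<psi> b) (\<theta> b)) (Fa f)) (\<psi> a)"
      using comp_assoc[OF conjunct1[OF \<psi>a] comp_Hom[OF Ff \<theta>b] conjunct1[OF \<psi>b]]
        comp_assoc[OF Ff \<theta>b conjunct1[OF \<psi>b]] by simp
    also have "\<dots> = cmp C (Fa f) (\<psi> a)"
      using \<psi>b comp_idt_left[OF Ff] by simp
    finally show "cmp C (\<psi> (ccod C f)) (Ga f) = cmp C (Fa f) (\<psi> (cdom C f))"
      by (simp add: a_def b_def)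
  qed
  then show ?thesis by blast
qed

lemma nat_iso_precomp:
  assumes K: "hom_preserving C Ko Ka" and \<theta>: "nat_iso C Fo Fa Go Ga \<theta>"
  shows "nat_iso C (\<lambda>x. Fo (Ko x)) (\<lambda>f. Fa (Ka f)) (\<lambda>x. Go (Ko x)) (\<lambda>f. Ga (Ka f)) (\<lambda>x. \<theta> (Ko x))"
proof (rule nat_isoI)
  show "iso_in C (\<theta> (Ko x)) (Fo (Ko x)) (Go (Ko x))" if "x \<in> Obj C" for x
    using nat_iso_iso[OF \<theta> hom_preserving_Obj[OF K that]] .
next
  fix f assume "f \<in> Arr C"
  then have "Ka f \<in> Hom C (Ko (cdom C f)) (Ko (ccod C f))"
    by (rule hom_preserving_Arr[OF K])
  then show "cmp C (\<theta> (Ko (ccod C f))) (Fa (Ka f)) = cmp C (Ga (Ka f)) (\<theta> (Ko (cdom C f)))"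
    using nat_iso_natural[OF \<theta>, of "Ka f"] unfolding Hom_def by simp
qed

end

locale monoidal =
  fixes M :: "('o, 'a, 'z) moncat_scheme"
  assumes monoidal_category: "monoidal_category M"
begin

sublocale is_category M
  using monoidal_category unfolding monoidal_category_def by unfold_locales (elim conjE)

lemma munit_Obj: "munit M \<in> Obj M"
  using monoidal_category unfolding monoidal_category_def by (elim conjE) blast

lemma tar_Hom: "f \<in> Hom M a b \<Longrightarrow> g \<in> Hom M c d \<Longrightarrow> tar M f g \<in> Hom M (tob M a c) (tob M b d)"
  using monoidal_category unfolding monoidal_category_def Hom_def by (elim conjE) auto

lemma tar_idt: "x \<in> Obj M \<Longrightarrow> y \<in> Obj M \<Longrightarrow> tar M (idt M x) (idt M y) = idt M (tob M x y)"
  using monoidal_category unfolding monoidal_category_def by (elim conjE) blast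

lemma tar_comp:
  "f \<in> Hom M a b \<Longrightarrow> f' \<in> Hom M b c \<Longrightarrow> g \<in> Hom M a' b' \<Longrightarrow> g' \<in> Hom M b' c' \<Longrightarrow>
     tar M (cmp M f' f) (cmp M g' g) = cmp M (tar M f' g') (tar M f g)"
  using monoidal_category unfolding monoidal_category_def Hom_def by (elim conjE) auto

lemma massoc_iso:
  "x \<in> Obj M \<Longrightarrow> y \<in> Obj M \<Longrightarrow> z \<in> Obj M \<Longrightarrow>
     iso_in M (massoc M x y z) (tob M (tob M x y) z) (tob M x (tob M y z))"
  using monoidal_category unfolding monoidal_category_def by (elim conjE) blast

lemma massoc_natural:
  "f \<in> Arr M \<Longrightarrow> g \<in> Arr M \<Longrightarrow> h \<in> Arr M \<Longrightarrow>
     cmp M (massoc M (ccod M f) (ccod M g) (ccod M h)) (tar M (tar M f g) h) =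
     cmp M (tar M f (tar M g h)) (massoc M (cdom M f) (cdom M g) (cdom M h))"
  using monoidal_category unfolding monoidal_category_def by (elim conjE) blast

lemma lunit_iso: "x \<in> Obj M \<Longrightarrow> iso_in M (lunit M x) (tob M (munit M) x) x"
  using monoidal_category unfolding monoidal_category_def by (elim conjE) blast

lemma lunit_natural:
  "f \<in> Arr M \<Longrightarrow>
     cmp M (lunit M (ccod M f)) (tar M (idt M (munit M)) f) = cmp M f (lunit M (cdom M f))"
  using monoidal_category unfolding monoidal_category_def by (elim conjE) blast

lemma runit_iso: "x \<in> Obj M \<Longrightarrow> iso_in M (runit M x) (tob M x (munit M)) x"
  using monoidal_category unfolding monoidal_category_def by (elim conjE) blast

lemma runit_natural:
  "f \<in> Arr M \<Longrightarrow>
     cmp M (runit M (ccod M f)) (tar M f (idt M (munit M))) = cmp M f (runit M (cdom M f))"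
  using monoidal_category unfolding monoidal_category_def by (elim conjE) blast

lemma iso_tar:
  assumes "iso_in M f a b" and "iso_in M g c d"
  shows "iso_in M (tar M f g) (tob M a c) (tob M b d)"
proof -
  obtain f' where f: "f \<in> Hom M a b" "f' \<in> Hom M b a" "cmp M f' f = idt M a" "cmp M f f' = idt M b"
    using assms(1) unfolding iso_in_def by blast
  obtain g' where g: "g \<in> Hom M c d" "g' \<in> Hom M d c" "cmp M g' g = idt M c" "cmp M g g' = idt M d"
    using assms(2) unfolding iso_in_def by blast
  have "cmp M (tar M f' g') (tar M f g) = idt M (tob M a c)"
    using tar_comp[OF f(1,2) g(1,2)] f g tar_idt Hom_Obj by metis
  moreover have "cmp M (tar M f g) (tar M f' g') = idt M (tob M b d)"
    using tar_comp[OF f(2,1) g(2,1)] f g tar_idt Hom_Obj by metis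
  ultimately show ?thesis
    unfolding iso_in_def using tar_Hom[OF f(1) g(1)] tar_Hom[OF f(2) g(2)] by blast
qed

lemma hom_preserving_tensor:
  "hom_preserving M Fo Fa \<Longrightarrow> hom_preserving M Go Ga \<Longrightarrow>
     hom_preserving M (\<lambda>x. tob M (Fo x) (Go x)) (\<lambda>f. tar M (Fa f) (Ga f))"
  unfolding hom_preserving_def using tar_Hom by blast

lemma nat_iso_tensor:
  assumes F: "hom_preserving M Fo Fa" and F': "hom_preserving M Fo' Fa'"
    and G: "hom_preserving M Go Ga" and G': "hom_preserving M Go' Ga'"
    and \<theta>: "nat_iso M Fo Fa Go Ga \<theta>" and \<theta>': "nat_iso M Fo' Fa' Go' Ga' \<theta>'"
  shows "nat_iso M (\<lambda>x. tob M (Fo x) (Fo' x)) (\<lambda>f. tar M (Fa f) (Fa' f))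
                   (\<lambda>x. tob M (Go x) (Go' x)) (\<lambda>f. tar M (Ga f) (Ga' f))
                   (\<lambda>x. tar M (\<theta> x) (\<theta>' x))"
proof (rule nat_isoI)
  show "iso_in M (tar M (\<theta> x) (\<theta>' x)) (tob M (Fo x) (Fo' x)) (tob M (Go x) (Go' x))"
    if "x \<in> Obj M" for x
    using iso_tar nat_iso_iso[OF \<theta> that] nat_iso_iso[OF \<theta>' that] by blast
next
  fix f assume f: "f \<in> Arr M"
  define a b where "a = cdom M f" and "b = ccod M f"
  have ab: "a \<in> Obj M" "b \<in> Obj M" using Arr_Obj[OF f] by (simp_all add: a_def b_def)
  note Ff = hom_preserving_Arr[OF F f, folded a_def b_def]
  note F'f = hom_preserving_Arr[OF F' f, folded a_def b_def]
  note Gf = hom_preserving_Arr[OF G f, folded a_def b_def]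
  note G'f = hom_preserving_Arr[OF G' f, folded a_def b_def]
  have "cmp M (tar M (\<theta> b) (\<theta>' b)) (tar M (Fa f) (Fa' f)) =
      tar M (cmp M (\<theta> b) (Fa f)) (cmp M (\<theta>' b) (Fa' f))"
    using tar_comp[OF Ff nat_iso_Hom[OF \<theta> ab(2)] F'f nat_iso_Hom[OF \<theta>' ab(2)]] by simp
  also have "\<dots> = tar M (cmp M (Ga f) (\<theta> a)) (cmp M (Ga' f) (\<theta>' a))"
    using nat_iso_natural[OF \<theta> f] nat_iso_natural[OF \<theta>' f] by (simp add: a_def b_def)
  also have "\<dots> = cmp M (tar M (Ga f) (Ga' f)) (tar M (\<theta> a) (\<theta>' a))"
    using tar_comp[OF nat_iso_Hom[OF \<theta> ab(1)] Gf nat_iso_Hom[OF \<theta>' ab(1)] G'f] by simp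
  finally show "cmp M (tar M (\<theta> (ccod M f)) (\<theta>' (ccod M f))) (tar M (Fa f) (Fa' f)) =
      cmp M (tar M (Ga f) (Ga' f)) (tar M (\<theta> (cdom M f)) (\<theta>' (cdom M f)))"
    by (simp add: a_def b_def)
qed

lemma nat_iso_massoc:
  assumes F: "hom_preserving M Fo Fa" and G: "hom_preserving M Go Ga" and H: "hom_preserving M Ho Ha"
  shows "nat_iso M (\<lambda>x. tob M (tob M (Fo x) (Go x)) (Ho x)) (\<lambda>f. tar M (tar M (Fa f) (Ga f)) (Ha f))
                   (\<lambda>x. tob M (Fo x) (tob M (Go x) (Ho x))) (\<lambda>f. tar M (Fa f) (tar M (Ga f) (Ha f)))
                   (\<lambda>x. massoc M (Fo x) (Go x) (Ho x))"
proof (rule nat_isoI)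
  show "iso_in M (massoc M (Fo x) (Go x) (Ho x))
      (tob M (tob M (Fo x) (Go x)) (Ho x)) (tob M (Fo x) (tob M (Go x) (Ho x)))"
    if "x \<in> Obj M" for x
    using massoc_iso hom_preserving_Obj[OF F that] hom_preserving_Obj[OF G that]
      hom_preserving_Obj[OF H that] by blast
next
  fix f assume "f \<in> Arr M"
  then have "Fa f \<in> Hom M (Fo (cdom M f)) (Fo (ccod M f))"
      "Ga f \<in> Hom M (Go (cdom M f)) (Go (ccod M f))"
      "Ha f \<in> Hom M (Ho (cdom M f)) (Ho (ccod M f))"
    using hom_preserving_Arr[OF F] hom_preserving_Arr[OF G] hom_preserving_Arr[OF H] by blast+
  then show "cmp M (massoc M (Fo (ccod M f)) (Go (ccod M f)) (Ho (ccod M f)))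
        (tar M (tar M (Fa f) (Ga f)) (Ha f)) =
      cmp M (tar M (Fa f) (tar M (Ga f) (Ha f)))
        (massoc M (Fo (cdom M f)) (Go (cdom M f)) (Ho (cdom M f)))"
    using massoc_natural[of "Fa f" "Ga f" "Ha f"] unfolding Hom_def by auto
qed

lemma nat_iso_lunit:
  assumes F: "hom_preserving M Fo Fa"
  shows "nat_iso M (\<lambda>x. tob M (munit M) (Fo x)) (\<lambda>f. tar M (idt M (munit M)) (Fa f))
                   Fo Fa (\<lambda>x. lunit M (Fo x))"
proof (rule nat_isoI)
  show "iso_in M (lunit M (Fo x)) (tob M (munit M) (Fo x)) (Fo x)" if "x \<in> Obj M" for x
    using lunit_iso hom_preserving_Obj[OF F that] .
next
  fix f assume "f \<in> Arr M"
  then have "Fa f \<in> Hom M (Fo (cdom M f)) (Fo (ccod M f))"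
    by (rule hom_preserving_Arr[OF F])
  then show "cmp M (lunit M (Fo (ccod M f))) (tar M (idt M (munit M)) (Fa f)) =
      cmp M (Fa f) (lunit M (Fo (cdom M f)))"
    using lunit_natural[of "Fa f"] unfolding Hom_def by auto
qed

lemma nat_iso_runit:
  assumes F: "hom_preserving M Fo Fa"
  shows "nat_iso M (\<lambda>x. tob M (Fo x) (munit M)) (\<lambda>f. tar M (Fa f) (idt M (munit M)))
                   Fo Fa (\<lambda>x. runit M (Fo x))"
proof (rule nat_isoI)
  show "iso_in M (runit M (Fo x)) (tob M (Fo x) (munit M)) (Fo x)" if "x \<in> Obj M" for x
    using runit_iso hom_preserving_Obj[OF F that] .
next
  fix f assume "f \<in> Arr M"
  then have "Fa f \<in> Hom M (Fo (cdom M f)) (Fo (ccod M f))"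
    by (rule hom_preserving_Arr[OF F])
  then show "cmp M (runit M (Fo (ccod M f))) (tar M (Fa f) (idt M (munit M))) =
      cmp M (Fa f) (runit M (Fo (cdom M f)))"
    using runit_natural[of "Fa f"] unfolding Hom_def by auto
qed

end

locale functorial_inverses = monoidal +
  fixes io :: "'o \<Rightarrow> 'o" and ia :: "'a \<Rightarrow> 'a" and eps :: "'o \<Rightarrow> 'a"
  assumes choice: "functorial_inverses_choice M io ia eps"
begin

lemma inverse_hom_preserving: "hom_preserving M io ia"
  using choice endofunctor_hom_preserving unfolding functorial_inverses_choice_def by blast

lemma counit_nat_iso:
  "nat_iso M (\<lambda>x. tob M x (io x)) (\<lambda>f. tar M f (ia f)) (\<lambda>x. munit M) (\<lambda>f. idt M (munit M)) eps"
  using choice unfolding functorial_inverses_choice_def by blast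

lemma double_inverse_hom_preserving: "hom_preserving M (\<lambda>x. io (io x)) (\<lambda>f. ia (ia f))"
  using hom_preserving_comp[OF inverse_hom_preserving inverse_hom_preserving] .

lemma tensor_inverse_hom_preserving: "hom_preserving M (\<lambda>x. tob M x (io x)) (\<lambda>f. tar M f (ia f))"
  using hom_preserving_tensor[OF hom_preserving_id inverse_hom_preserving] .

lemma triple_hom_preserving:
  "hom_preserving M (\<lambda>x. tob M (tob M x (io x)) (io (io x))) (\<lambda>f. tar M (tar M f (ia f)) (ia (ia f)))"
  using hom_preserving_tensor[OF tensor_inverse_hom_preserving double_inverse_hom_preserving] .

lemma triple_iso_double_inverse:
  "nat_iso M (\<lambda>x. tob M (tob M x (io x)) (io (io x))) (\<lambda>f. tar M (tar M f (ia f)) (ia (ia f)))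
     (\<lambda>x. io (io x)) (\<lambda>f. ia (ia f))
     (\<lambda>x. cmp M (lunit M (io (io x))) (tar M (eps x) (idt M (io (io x)))))"
proof -
  note ii = double_inverse_hom_preserving and one = hom_preserving_const[OF munit_Obj]
  show ?thesis
    by (rule nat_iso_trans[OF triple_hom_preserving hom_preserving_tensor[OF one ii] ii
          nat_iso_tensor[OF tensor_inverse_hom_preserving ii one ii counit_nat_iso nat_iso_refl[OF ii]]
          nat_iso_lunit[OF ii]])
qed

lemma triple_iso_identity:
  "nat_iso M (\<lambda>x. tob M (tob M x (io x)) (io (io x))) (\<lambda>f. tar M (tar M f (ia f)) (ia (ia f)))
     (\<lambda>x. x) (\<lambda>f. f)
     (\<lambda>x. cmp M (runit M x) (cmp M (tar M (idt M x) (eps (io x))) (massoc M x (io x) (io (io x)))))"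
proof -
  note id = hom_preserving_id and i = inverse_hom_preserving and ii = double_inverse_hom_preserving
  note one = hom_preserving_const[OF munit_Obj]
  note ix_iix = hom_preserving_tensor[OF i ii]
  have "nat_iso M (\<lambda>x. tob M (tob M x (io x)) (io (io x))) (\<lambda>f. tar M (tar M f (ia f)) (ia (ia f)))
      (\<lambda>x. tob M x (munit M)) (\<lambda>f. tar M f (idt M (munit M)))
      (\<lambda>x. cmp M (tar M (idt M x) (eps (io x))) (massoc M x (io x) (io (io x))))"
    by (rule nat_iso_trans[OF triple_hom_preserving hom_preserving_tensor[OF id ix_iix]
          hom_preserving_tensor[OF id one] nat_iso_massoc[OF id i ii]
          nat_iso_tensor[OF id ix_iix id one nat_iso_refl[OF id] nat_iso_precomp[OF i counit_nat_iso]]])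
  from nat_iso_trans[OF triple_hom_preserving hom_preserving_tensor[OF id one] id this
      nat_iso_runit[OF id]]
  show ?thesis .
qed

lemma double_inverse_iso_identity:
  "\<exists>\<theta>. nat_iso M (\<lambda>x. io (io x)) (\<lambda>f. ia (ia f)) (\<lambda>x. x) (\<lambda>f. f) \<theta>"
proof -
  obtain \<psi> where "nat_iso M (\<lambda>x. io (io x)) (\<lambda>f. ia (ia f))
      (\<lambda>x. tob M (tob M x (io x)) (io (io x))) (\<lambda>f. tar M (tar M f (ia f)) (ia (ia f))) \<psi>"
    using nat_iso_sym[OF triple_hom_preserving double_inverse_hom_preserving
        triple_iso_double_inverse] by blast
  from nat_iso_trans[OF double_inverse_hom_preserving triple_hom_preserving hom_preserving_id
      this triple_iso_identity]
  show ?thesis by blast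
qed

end

theorem lemma3p12:
  fixes M :: "('o, 'a, 'z) moncat_scheme"
    and io :: "'o \<Rightarrow> 'o" and ia :: "'a \<Rightarrow> 'a" and eps :: "'o \<Rightarrow> 'a"
  assumes "monoidal_category M"
    and "admits_functorial_inverses M"
    and "functorial_inverses_choice M io ia eps"
  shows "\<exists>\<theta>. nat_iso M (\<lambda>x. io (io x)) (\<lambda>f. ia (ia f)) (\<lambda>x. x) (\<lambda>f. f) \<theta>"
proof -
  interpret functorial_inverses M io ia eps
    using assms(1,3) by unfold_locales
  show ?thesis by (rule double_inverse_iso_identity)
qed

end
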